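(* Let $(R_0,R_1,s,t,i,\circ)$ be a strict $2$-rack. Then $\ker(s)$ and $\ker(t)$ act trivially on each other: $f\lhd g=f$ and $g\lhd f=g$ for all $f\in\ker(t)$ and all $g\in\ker(s)$.
   Context: A (right) rack is a set with a binary operation $\lhd$ such that each $x\mapsto x\lhd y$ is bijective and $(x\lhd y)\lhd z=(x\lhd z)\lhd(y\lhd z)$. A pointed rack is a rack $X$ with an element $1$ such that $1\lhd x=1$ and $x\lhd 1=x$ for all $x$. A strict $2$-rack (categorical rack) is a category object in racks: pointed racks $R_0$ (objects) and $R_1$ (morphisms) with morphisms of pointed racks $s,t:R_1\to R_0$ (source, target), $i:R_0\to R_1$ (identities) and a composition $\circ:R_1\times_{R_0}R_1\to R_1$ (defined on pairs $(g,f)$ with $s(g)=t(f)$) which is a rack morphism, where $R_1\times_{R_0}R_1$ carries the componentwise rack operation, satisfying the usual category axioms ($s\circ i=t\circ i=\mathrm{id}$, associativity, $i$ gives two-sided identities, $s(g\circ f)=s(f)$, $t(g\circ f)=t(g)$). That $\circ$ is a rack morphism is the middle four exchange property $(g_1\lhd g_2)\circ(f_1\lhd f_2)=(g_1\circ f_1)\lhd(g_2\circ f_2)$ for composable pairs. Here $\ker(s)=\{f\in R_1: s(f)=1\}$ and $\ker(t)=\{f\in R_1:t(f)=1\}$. *)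

theory Defs
  imports Main
begin

text \<open>A right rack on a carrier set X with operation op (x op y = x \<lhd> y).\<close>
definition rack :: "'a set \<Rightarrow> ('a \<Rightarrow> 'a \<Rightarrow> 'a) \<Rightarrow> bool" where
  "rack X op \<longleftrightarrow>
     (\<forall>x\<in>X. \<forall>y\<in>X. op x y \<in> X) \<and>
     (\<forall>y\<in>X. bij_betw (\<lambda>x. op x y) X X) \<and>
     (\<forall>x\<in>X. \<forall>y\<in>X. \<forall>z\<in>X. op (op x y) z = op (op x z) (op y z))"

definition pointed_rack :: "'a set \<Rightarrow> ('a \<Rightarrow> 'a \<Rightarrow> 'a) \<Rightarrow> 'a \<Rightarrow> bool" where
  "pointed_rack X op e \<longleftrightarrow> rack X op \<and> e \<in> X \<and>
     (\<forall>x\<in>X. op e x = e \<and> op x e = x)"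

definition pointed_rack_hom ::
  "'a set \<Rightarrow> ('a \<Rightarrow> 'a \<Rightarrow> 'a) \<Rightarrow> 'a \<Rightarrow> 'b set \<Rightarrow> ('b \<Rightarrow> 'b \<Rightarrow> 'b) \<Rightarrow> 'b \<Rightarrow> ('a \<Rightarrow> 'b) \<Rightarrow> bool" where
  "pointed_rack_hom X opX eX Y opY eY h \<longleftrightarrow>
     (\<forall>x\<in>X. h x \<in> Y) \<and> h eX = eY \<and>
     (\<forall>x\<in>X. \<forall>y\<in>X. h (opX x y) = opY (h x) (h y))"

text \<open>A strict 2-rack: a category object in pointed racks.
  Objects R0 with op0, point e0; morphisms R1 with op1, point e1;
  source s, target t, identities i, composition cmp g f (= g \<circ> f, defined when s g = t f).\<close>
definition strict_2_rack ::
  "'a set \<Rightarrow> ('a \<Rightarrow> 'a \<Rightarrow> 'a) \<Rightarrow> 'a \<Rightarrow> 'b set \<Rightarrow> ('b \<Rightarrow> 'b \<Rightarrow> 'b) \<Rightarrow> 'b \<Rightarrow>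
   ('b \<Rightarrow> 'a) \<Rightarrow> ('b \<Rightarrow> 'a) \<Rightarrow> ('a \<Rightarrow> 'b) \<Rightarrow> ('b \<Rightarrow> 'b \<Rightarrow> 'b) \<Rightarrow> bool" where
  "strict_2_rack R0 op0 e0 R1 op1 e1 s t i cmp \<longleftrightarrow>
     pointed_rack R0 op0 e0 \<and> pointed_rack R1 op1 e1 \<and>
     pointed_rack_hom R1 op1 e1 R0 op0 e0 s \<and>
     pointed_rack_hom R1 op1 e1 R0 op0 e0 t \<and>
     pointed_rack_hom R0 op0 e0 R1 op1 e1 i \<and>
     \<comment> \<open>composition is well-defined on composable pairs\<close>
     (\<forall>g\<in>R1. \<forall>f\<in>R1. s g = t f \<longrightarrow> cmp g f \<in> R1) \<and>
     \<comment> \<open>composition is a rack morphism (middle four exchange)\<close>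
     (\<forall>g1\<in>R1. \<forall>f1\<in>R1. \<forall>g2\<in>R1. \<forall>f2\<in>R1. s g1 = t f1 \<longrightarrow> s g2 = t f2 \<longrightarrow>
        cmp (op1 g1 g2) (op1 f1 f2) = op1 (cmp g1 f1) (cmp g2 f2)) \<and>
     \<comment> \<open>category axioms\<close>
     (\<forall>x\<in>R0. s (i x) = x \<and> t (i x) = x) \<and>
     (\<forall>g\<in>R1. \<forall>f\<in>R1. s g = t f \<longrightarrow> s (cmp g f) = s f \<and> t (cmp g f) = t g) \<and>
     (\<forall>f\<in>R1. cmp (i (t f)) f = f \<and> cmp f (i (s f)) = f) \<and>
     (\<forall>h\<in>R1. \<forall>g\<in>R1. \<forall>f\<in>R1. s h = t g \<longrightarrow> s g = t f \<longrightarrow>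
        cmp h (cmp g f) = cmp (cmp h g) f)"

end

theory Submission
  imports Defs
begin

text \<open>Kernel elements of t factor as e1 \<circ> f and kernel elements of s as g \<circ> e1, where e1 = i e0 is
  the identity on the base point.  Middle four exchange then computes f \<lhd> g as
  (e1 \<circ> f) \<lhd> (g \<circ> e1) = (e1 \<lhd> g) \<circ> (f \<lhd> e1) = e1 \<circ> f = f, and symmetrically g \<lhd> f = g.\<close>

context
  fixes R0 op0 e0 R1 op1 e1 s t i cmp
  assumes two_rack: "strict_2_rack R0 op0 e0 R1 op1 e1 s t i cmp"
begin

lemma strict_2_rack_point:
  shows "e1 \<in> R1" and "s e1 = e0" and "t e1 = e0" and "i e0 = e1"
  using two_rack unfolding strict_2_rack_def pointed_rack_def pointed_rack_hom_def by auto

lemma strict_2_rack_point_act: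
  assumes "x \<in> R1"
  shows "op1 e1 x = e1" and "op1 x e1 = x"
  using two_rack assms unfolding strict_2_rack_def pointed_rack_def by auto

lemma strict_2_rack_interchange:
  assumes "g1 \<in> R1" "f1 \<in> R1" "g2 \<in> R1" "f2 \<in> R1" "s g1 = t f1" "s g2 = t f2"
  shows "op1 (cmp g1 f1) (cmp g2 f2) = cmp (op1 g1 g2) (op1 f1 f2)"
  using two_rack assms unfolding strict_2_rack_def by simp

lemma strict_2_rack_comp_point_left:
  assumes "f \<in> R1" "t f = e0"
  shows "cmp e1 f = f"
  using two_rack assms strict_2_rack_point(4) unfolding strict_2_rack_def by metis

lemma strict_2_rack_comp_point_right:
  assumes "g \<in> R1" "s g = e0"
  shows "cmp g e1 = g"
  using two_rack assms strict_2_rack_point(4) unfolding strict_2_rack_def by metis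

lemma ker_target_act_ker_source:
  assumes "f \<in> R1" "t f = e0" "g \<in> R1" "s g = e0"
  shows "op1 f g = f"
proof -
  have "op1 f g = op1 (cmp e1 f) (cmp g e1)"
    using assms strict_2_rack_comp_point_left strict_2_rack_comp_point_right by simp
  also have "\<dots> = cmp (op1 e1 g) (op1 f e1)"
    using assms strict_2_rack_point by (simp add: strict_2_rack_interchange)
  also have "\<dots> = f"
    using assms strict_2_rack_point_act strict_2_rack_comp_point_left by simp
  finally show ?thesis .
qed

lemma ker_source_act_ker_target:
  assumes "f \<in> R1" "t f = e0" "g \<in> R1" "s g = e0"
  shows "op1 g f = g"
proof -
  have "op1 g f = op1 (cmp g e1) (cmp e1 f)"
    using assms strict_2_rack_comp_point_left strict_2_rack_comp_point_right by simp
  also have "\<dots> = cmp (op1 g e1) (op1 e1 f)"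
    using assms strict_2_rack_point by (simp add: strict_2_rack_interchange)
  also have "\<dots> = g"
    using assms strict_2_rack_point_act strict_2_rack_comp_point_right by simp
  finally show ?thesis .
qed

end

theorem mainTheorem3:
  assumes "strict_2_rack R0 op0 e0 R1 op1 e1 s t i cmp"
  shows "\<forall>f\<in>R1. \<forall>g\<in>R1. t f = e0 \<longrightarrow> s g = e0 \<longrightarrow>
           op1 f g = f \<and> op1 g f = g"
  using ker_target_act_ker_source[OF assms] ker_source_act_ker_target[OF assms] by blast

end
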